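(* Let $\mathcal A$ be a finite non-associative algebra. Then $\mathcal A$ has a qualitative representation if and only if there is a consistent atomic network $(N,\lambda)$ over $\mathcal A$ such that for every triple of atoms $(a,b,c)$ of $\mathcal A$ with $a;b\ge c$ there are nodes $x,y,z\in N$ with $\lambda(x,y)=a$, $\lambda(y,z)=b$ and $\lambda(x,z)=c$.
   Context: A non-associative algebra is an algebra $(A,0,1,+,-,1',\breve{\ },;)$ such that $(A,0,1,+,-)$ is a boolean algebra (with $x\cdot y=-(-x+-y)$ and $x\le y\iff x+y=y$); $1';x=x=x;1'$, $\breve{\breve x}=x$, $(x;y)\breve{}=\breve y;\breve x$; $\breve 0=x;0=0$, $(x+y)\breve{}=\breve x+\breve y$, $x;(y+z)=x;y+x;z$; and the Peircean law holds: $x;y\cdot\breve z=0$ iff $y;z\cdot\breve x=0$. An atom is a minimal nonzero element. A qualitative representation of $\mathcal A$ over base $D$ is an injective map $\phi:A\to\wp(D\times D)$ such that $0^\phi=\varnothing$, $1^\phi=D\times D$, $(1')^\phi=\{(x,x):x\in D\}$, $(a+b)^\phi=a^\phi\cup b^\phi$, $(-a)^\phi=(D\times D)\setminus a^\phi$, $(\breve a)^\phi=\{(y,x):(x,y)\in a^\phi\}$, and for all $a,b,c\in A$: $c^\phi\supseteq a^\phi\circ b^\phi\iff c\ge a;b$ (where $r\circ s$ is relational composition). A network over $\mathcal A$ is a pair $(N,\lambda)$ with $N$ a finite set and $\lambda:N\times N\to A$. It is consistent if for all $x,y,z\in N$: $\lambda(x,x)\le 1'$; $\lambda(x,y);\lambda(y,z)\cdot\lambda(x,z)\ne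 0$; $\lambda(x,y)\cdot\lambda(y,x)\breve{}\ne0$; $\lambda(x,y)\ne 0$. It is atomic if every $\lambda(x,y)$ is an atom. *)

theory Defs
  imports Main
begin

text \<open>A non-associative algebra (A,0,1,+,-,1',converse,;) on the type 'a (carrier = UNIV).\<close>

record 'a nalg =
  nbot  :: 'a
  ntop  :: 'a
  njoin :: "'a \<Rightarrow> 'a \<Rightarrow> 'a"
  ncompl :: "'a \<Rightarrow> 'a"
  nid   :: 'a
  nconv :: "'a \<Rightarrow> 'a"
  ncomp :: "'a \<Rightarrow> 'a \<Rightarrow> 'a"

definition nmeet :: "'a nalg \<Rightarrow> 'a \<Rightarrow> 'a \<Rightarrow> 'a" where
  "nmeet A x y = ncompl A (njoin A (ncompl A x) (ncompl A y))"

definition nle :: "'a nalg \<Rightarrow> 'a \<Rightarrow> 'a \<Rightarrow> bool" where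
  "nle A x y \<longleftrightarrow> njoin A x y = y"

definition boolean_algebra_axioms :: "'a nalg \<Rightarrow> bool" where
  "boolean_algebra_axioms A \<longleftrightarrow>
     (\<forall>x y z. njoin A x (njoin A y z) = njoin A (njoin A x y) z) \<and>
     (\<forall>x y z. nmeet A x (nmeet A y z) = nmeet A (nmeet A x y) z) \<and>
     (\<forall>x y. njoin A x y = njoin A y x) \<and>
     (\<forall>x y. nmeet A x y = nmeet A y x) \<and>
     (\<forall>x y. njoin A x (nmeet A x y) = x) \<and>
     (\<forall>x y. nmeet A x (njoin A x y) = x) \<and>
     (\<forall>x y z. nmeet A x (njoin A y z) = njoin A (nmeet A x y) (nmeet A x z)) \<and>
     (\<forall>x. njoin A x (nbot A) = x) \<and>
     (\<forall>x. nmeet A x (ntop A) = x) \<and>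
     (\<forall>x. njoin A x (ncompl A x) = ntop A) \<and>
     (\<forall>x. nmeet A x (ncompl A x) = nbot A)"

definition nonassoc_algebra :: "'a nalg \<Rightarrow> bool" where
  "nonassoc_algebra A \<longleftrightarrow>
     boolean_algebra_axioms A \<and>
     (\<forall>x. ncomp A (nid A) x = x \<and> ncomp A x (nid A) = x) \<and>
     (\<forall>x. nconv A (nconv A x) = x) \<and>
     (\<forall>x y. nconv A (ncomp A x y) = ncomp A (nconv A y) (nconv A x)) \<and>
     nconv A (nbot A) = nbot A \<and>
     (\<forall>x. ncomp A x (nbot A) = nbot A) \<and>
     (\<forall>x y. nconv A (njoin A x y) = njoin A (nconv A x) (nconv A y)) \<and>
     (\<forall>x y z. ncomp A x (njoin A y z) = njoin A (ncomp A x y) (ncomp A x z)) \<and>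
     (\<forall>x y z. nmeet A (ncomp A x y) (nconv A z) = nbot A
               \<longleftrightarrow> nmeet A (ncomp A y z) (nconv A x) = nbot A)"

definition is_atom :: "'a nalg \<Rightarrow> 'a \<Rightarrow> bool" where
  "is_atom A a \<longleftrightarrow> a \<noteq> nbot A \<and> (\<forall>y. nle A y a \<longrightarrow> y = nbot A \<or> y = a)"

definition qualitative_rep :: "'a nalg \<Rightarrow> 'b set \<Rightarrow> ('a \<Rightarrow> ('b \<times> 'b) set) \<Rightarrow> bool" where
  "qualitative_rep A D \<phi> \<longleftrightarrow>
     inj \<phi> \<and>
     \<phi> (nbot A) = {} \<and>
     \<phi> (ntop A) = D \<times> D \<and>
     \<phi> (nid A) = {(x, x) | x. x \<in> D} \<and>
     (\<forall>a b. \<phi> (njoin A a b) = \<phi> a \<union> \<phi> b) \<and>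
     (\<forall>a. \<phi> (ncompl A a) = (D \<times> D) - \<phi> a) \<and>
     (\<forall>a. \<phi> (nconv A a) = {(y, x). (x, y) \<in> \<phi> a}) \<and>
     (\<forall>a b c. \<phi> a O \<phi> b \<subseteq> \<phi> c \<longleftrightarrow> nle A (ncomp A a b) c)"

definition consistent_network :: "'a nalg \<Rightarrow> 'n set \<Rightarrow> ('n \<Rightarrow> 'n \<Rightarrow> 'a) \<Rightarrow> bool" where
  "consistent_network A N L \<longleftrightarrow>
     (\<forall>x\<in>N. nle A (L x x) (nid A)) \<and>
     (\<forall>x\<in>N. \<forall>y\<in>N. \<forall>z\<in>N. nmeet A (ncomp A (L x y) (L y z)) (L x z) \<noteq> nbot A) \<and>
     (\<forall>x\<in>N. \<forall>y\<in>N. nmeet A (L x y) (nconv A (L y x)) \<noteq> nbot A) \<and>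
     (\<forall>x\<in>N. \<forall>y\<in>N. L x y \<noteq> nbot A)"

definition atomic_network :: "'a nalg \<Rightarrow> 'n set \<Rightarrow> ('n \<Rightarrow> 'n \<Rightarrow> 'a) \<Rightarrow> bool" where
  "atomic_network A N L \<longleftrightarrow> (\<forall>x\<in>N. \<forall>y\<in>N. is_atom A (L x y))"

end

theory Submission
  imports Defs
begin

text \<open>
  Given a representation, label each pair of points by the unique atom whose image contains it.
  Every triple of atoms with \<open>c \<le> a ; b\<close> is realised by three points, and as there are finitely
  many such triples, finitely many points carry an atomic network realising all of them.

  Conversely, in a consistent atomic network the relation ``the label lies below \<open>1'\<close>'' is an
  equivalence under which labels are invariant, and the label of a reversed edge is the converse
  label. Mapping its classes injectively into the infinite type, send \<open>a\<close> to the set of edges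
  whose label lies below \<open>a\<close>. Since labels are atoms, joins, complements and converse are
  preserved; composition is preserved because every atom below \<open>a ; b\<close> lies below \<open>a' ; b'\<close> for
  atoms \<open>a' \<le> a\<close>, \<open>b' \<le> b\<close>, and that triangle occurs in the network.
\<close>

definition realizes_all_triangles :: "'a nalg \<Rightarrow> 'n set \<Rightarrow> ('n \<Rightarrow> 'n \<Rightarrow> 'a) \<Rightarrow> bool" where
  "realizes_all_triangles A N L \<longleftrightarrow>
     (\<forall>a b c. is_atom A a \<and> is_atom A b \<and> is_atom A c \<and> nle A c (ncomp A a b) \<longrightarrow>
        (\<exists>x\<in>N. \<exists>y\<in>N. \<exists>z\<in>N. L x y = a \<and> L y z = b \<and> L x z = c))"

lemma consistent_network_reindex:
  "consistent_network A N (\<lambda>i j. L (e i) (e j)) \<longleftrightarrow> consistent_network A (e ` N) L"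
  unfolding consistent_network_def by auto

lemma atomic_network_reindex:
  "atomic_network A N (\<lambda>i j. L (e i) (e j)) \<longleftrightarrow> atomic_network A (e ` N) L"
  unfolding atomic_network_def by auto

lemma realizes_all_triangles_reindex:
  "realizes_all_triangles A N (\<lambda>i j. L (e i) (e j)) \<longleftrightarrow> realizes_all_triangles A (e ` N) L"
  unfolding realizes_all_triangles_def by auto

lemma ex_nat_network:
  assumes "finite M" and "consistent_network A M L" and "atomic_network A M L"
    and "realizes_all_triangles A M L"
  shows "\<exists>(N :: nat set) L'. finite N \<and> consistent_network A N L' \<and> atomic_network A N L'
           \<and> realizes_all_triangles A N L'"
proof -
  obtain e where "bij_betw e {0..<card M} M"
    using ex_bij_betw_nat_finite[OF assms(1)] by blast
  then have "e ` {0..<card M} = M"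
    by (simp add: bij_betw_def)
  then show ?thesis
    using assms consistent_network_reindex atomic_network_reindex realizes_all_triangles_reindex
    by (metis finite_atLeastLessThan)
qed

section \<open>Boolean reduct and atoms\<close>

locale finite_nonassoc_algebra =
  fixes A :: "'a nalg"
  assumes finite_carrier: "finite (UNIV :: 'a set)"
    and nonassoc: "nonassoc_algebra A"
begin

abbreviation A_join (infixl "\<oplus>" 65) where "x \<oplus> y \<equiv> njoin A x y"
abbreviation A_meet (infixl "\<otimes>" 70) where "x \<otimes> y \<equiv> nmeet A x y"
abbreviation A_compl ("\<ominus> _" [81] 80) where "\<ominus> x \<equiv> ncompl A x"
abbreviation A_bot ("\<zero>") where "\<zero> \<equiv> nbot A"
abbreviation A_top ("\<one>") where "\<one> \<equiv> ntop A"
abbreviation A_le (infix "\<sqsubseteq>" 50) where "x \<sqsubseteq> y \<equiv> nle A x y"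
abbreviation A_one ("1''") where "1' \<equiv> nid A"
abbreviation A_conv ("_\<^sup>\<smile>" [1000] 999) where "x\<^sup>\<smile> \<equiv> nconv A x"
abbreviation A_comp (infixl ";;" 75) where "x ;; y \<equiv> ncomp A x y"
abbreviation atom where "atom x \<equiv> is_atom A x"

lemma
  join_assoc: "x \<oplus> (y \<oplus> z) = x \<oplus> y \<oplus> z" and
  meet_assoc: "x \<otimes> (y \<otimes> z) = x \<otimes> y \<otimes> z" and
  join_comm: "x \<oplus> y = y \<oplus> x" and
  meet_comm: "x \<otimes> y = y \<otimes> x" and
  join_meet_absorb: "x \<oplus> (x \<otimes> y) = x" and
  meet_join_absorb: "x \<otimes> (x \<oplus> y) = x" and
  meet_join_distrib: "x \<otimes> (y \<oplus> z) = x \<otimes> y \<oplus> x \<otimes> z" and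
  join_bot: "x \<oplus> \<zero> = x" and
  meet_top: "x \<otimes> \<one> = x" and
  join_compl: "x \<oplus> \<ominus> x = \<one>" and
  meet_compl: "x \<otimes> \<ominus> x = \<zero>"
  using nonassoc unfolding nonassoc_algebra_def boolean_algebra_axioms_def by metis+

lemma join_meet_distrib: "x \<oplus> (y \<otimes> z) = (x \<oplus> y) \<otimes> (x \<oplus> z)"
proof -
  have "(x \<oplus> y) \<otimes> (x \<oplus> z) = x \<oplus> x \<otimes> z \<oplus> y \<otimes> z"
    by (metis meet_join_distrib meet_comm meet_join_absorb join_assoc)
  then show ?thesis
    by (simp add: join_meet_absorb)
qed

lemma le_iff_meet: "x \<sqsubseteq> y \<longleftrightarrow> x \<otimes> y = x"
  unfolding nle_def by (metis join_meet_absorb meet_join_absorb join_comm meet_comm)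

interpretation BA: boolean_algebra "\<lambda>x y. x \<otimes> \<ominus> y" "ncompl A" "nmeet A" "nle A"
  "\<lambda>x y. x \<sqsubseteq> y \<and> x \<noteq> y" "njoin A" "nbot A" "ntop A"
proof unfold_locales
  show "x \<sqsubseteq> y \<and> x \<noteq> y \<longleftrightarrow> x \<sqsubseteq> y \<and> \<not> y \<sqsubseteq> x" for x y
    unfolding nle_def by (metis join_comm)
  show "x \<sqsubseteq> x" for x
    unfolding le_iff_meet by (metis join_meet_absorb meet_join_absorb)
  show "x \<sqsubseteq> z" if "x \<sqsubseteq> y" "y \<sqsubseteq> z" for x y z
    using that unfolding nle_def by (metis join_assoc)
  show "x = y" if "x \<sqsubseteq> y" "y \<sqsubseteq> x" for x y
    using that unfolding nle_def by (metis join_comm)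
  show "x \<otimes> y \<sqsubseteq> x" "x \<otimes> y \<sqsubseteq> y" for x y
    unfolding nle_def by (metis join_meet_absorb join_comm meet_comm)+
  show "x \<sqsubseteq> y \<otimes> z" if "x \<sqsubseteq> y" "x \<sqsubseteq> z" for x y z
    using that unfolding le_iff_meet by (metis meet_assoc)
  show "x \<sqsubseteq> x \<oplus> y" "y \<sqsubseteq> x \<oplus> y" for x y
    unfolding le_iff_meet by (metis meet_join_absorb join_comm)+
  show "y \<oplus> z \<sqsubseteq> x" if "y \<sqsubseteq> x" "z \<sqsubseteq> x" for x y z
    using that unfolding nle_def by (metis join_assoc)
  show "\<zero> \<sqsubseteq> x" for x
    by (simp add: nle_def join_comm join_bot)
  show "x \<sqsubseteq> \<one>" for x
    by (simp add: le_iff_meet meet_top)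
qed (simp_all add: join_meet_distrib meet_compl join_compl)

lemma card_below_less:
  assumes "y \<sqsubseteq> x" and "y \<noteq> x"
  shows "card {z. z \<sqsubseteq> y} < card {z. z \<sqsubseteq> x}"
proof (rule psubset_card_mono)
  show "finite {z. z \<sqsubseteq> x}"
    using finite_carrier by (rule finite_subset[OF subset_UNIV])
  show "{z. z \<sqsubseteq> y} \<subset> {z. z \<sqsubseteq> x}"
    using assms BA.order_trans BA.order.antisym by blast
qed

lemma join_prime_ex_atom:
  assumes join_prime: "\<And>u v. P (u \<oplus> v) \<longleftrightarrow> P u \<or> P v"
    and not_bot: "\<not> P \<zero>" and "P x"
  shows "\<exists>a. atom a \<and> a \<sqsubseteq> x \<and> P a"
  using \<open>P x\<close>
proof (induction "card {z. z \<sqsubseteq> x}" arbitrary: x rule: less_induct)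
  case less
  show ?case
  proof (cases "atom x")
    case True
    then show ?thesis using less.prems by blast
  next
    case False
    moreover have "x \<noteq> \<zero>" using less.prems not_bot by blast
    ultimately obtain y where y: "y \<sqsubseteq> x" "y \<noteq> \<zero>" "y \<noteq> x"
      unfolding is_atom_def by blast
    let ?z = "x \<otimes> \<ominus> y"
    have "?z \<noteq> x"
    proof
      assume "?z = x"
      then have "y \<sqsubseteq> \<ominus> y" using y(1) BA.inf.absorb_iff1 BA.le_infE by metis
      then show False using y(2) BA.inf_shunt[of y y] by simp
    qed
    moreover have "x = y \<oplus> ?z"
      using y(1) BA.inf.absorb2 BA.sup_inf_distrib1 by (simp add: BA.sup.absorb2)
    then have "P y \<or> P ?z"
      using less.prems join_prime by metis
    ultimately show ?thesis
      using y less.hyps card_below_less BA.inf_le1 BA.order_trans by meson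
  qed
qed

lemma meet_ne_bot_mono: "x \<sqsubseteq> y \<Longrightarrow> x \<otimes> z \<noteq> \<zero> \<Longrightarrow> y \<otimes> z \<noteq> \<zero>"
  by (metis BA.inf_mono BA.order_refl BA.bot_unique)

lemma not_le_imp_atom: "\<not> x \<sqsubseteq> y \<Longrightarrow> \<exists>a. atom a \<and> a \<sqsubseteq> x \<and> \<not> a \<sqsubseteq> y"
  using join_prime_ex_atom[of "\<lambda>z. \<not> z \<sqsubseteq> y"] by simp

lemma eq_iff_same_atoms_below:
  assumes "\<And>a. atom a \<Longrightarrow> a \<sqsubseteq> x \<longleftrightarrow> a \<sqsubseteq> y"
  shows "x = y"
  using assms not_le_imp_atom BA.order.antisym by metis

lemma atom_not_le_bot: "atom a \<Longrightarrow> \<not> a \<sqsubseteq> \<zero>"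
  by (simp add: is_atom_def BA.bot_unique)

lemma atom_le_compl_iff:
  assumes "atom a"
  shows "a \<sqsubseteq> \<ominus> x \<longleftrightarrow> \<not> a \<sqsubseteq> x"
proof -
  have "a \<otimes> x = \<zero> \<or> a \<otimes> x = a"
    using assms BA.inf_le1 unfolding is_atom_def by blast
  then show ?thesis
    using assms BA.inf_shunt BA.inf.absorb_iff1 BA.inf.idem BA.le_infI2
    unfolding is_atom_def by metis
qed

lemma atom_le_join_iff: "atom a \<Longrightarrow> a \<sqsubseteq> x \<oplus> y \<longleftrightarrow> a \<sqsubseteq> x \<or> a \<sqsubseteq> y"
  using atom_le_compl_iff[of a "x \<oplus> y"] atom_le_compl_iff[of a x] atom_le_compl_iff[of a y]
  by auto

lemma atom_meet_eq_bot_iff: "atom a \<Longrightarrow> a \<otimes> x = \<zero> \<longleftrightarrow> \<not> a \<sqsubseteq> x"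
  by (simp add: BA.inf_shunt atom_le_compl_iff)

lemma atoms_eqI: "atom a \<Longrightarrow> atom b \<Longrightarrow> a \<otimes> b \<noteq> \<zero> \<Longrightarrow> a = b"
  using atom_meet_eq_bot_iff unfolding is_atom_def by metis

section \<open>Converse and composition\<close>

lemma
  one_comp: "1' ;; x = x" and
  comp_one: "x ;; 1' = x" and
  conv_conv: "(x\<^sup>\<smile>)\<^sup>\<smile> = x" and
  conv_comp: "(x ;; y)\<^sup>\<smile> = y\<^sup>\<smile> ;; x\<^sup>\<smile>" and
  conv_bot: "\<zero>\<^sup>\<smile> = \<zero>" and
  comp_bot: "x ;; \<zero> = \<zero>" and
  conv_join: "(x \<oplus> y)\<^sup>\<smile> = x\<^sup>\<smile> \<oplus> y\<^sup>\<smile>" and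
  comp_join: "x ;; (y \<oplus> z) = x ;; y \<oplus> x ;; z"
  using nonassoc unfolding nonassoc_algebra_def by simp_all

lemma join_comp: "(x \<oplus> y) ;; z = x ;; z \<oplus> y ;; z"
  by (metis conv_conv conv_comp conv_join comp_join)

lemma bot_comp: "\<zero> ;; x = \<zero>"
  by (metis conv_conv conv_comp conv_bot comp_bot)

lemma conv_mono: "x \<sqsubseteq> y \<Longrightarrow> x\<^sup>\<smile> \<sqsubseteq> y\<^sup>\<smile>"
  by (metis BA.le_iff_sup conv_join)

lemma conv_le_iff: "x\<^sup>\<smile> \<sqsubseteq> y \<longleftrightarrow> x \<sqsubseteq> y\<^sup>\<smile>"
  by (metis conv_mono conv_conv)

lemma comp_mono: "x \<sqsubseteq> x' \<Longrightarrow> y \<sqsubseteq> y' \<Longrightarrow> x ;; y \<sqsubseteq> x' ;; y'"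
  by (metis BA.le_iff_sup join_comp comp_join BA.sup_ge1 BA.order_trans)

lemma atom_conv: "atom a \<Longrightarrow> atom (a\<^sup>\<smile>)"
  unfolding is_atom_def by (metis conv_conv conv_bot conv_le_iff)

lemma atom_le_comp_imp_atoms:
  assumes "atom d" and "d \<sqsubseteq> x ;; y"
  shows "\<exists>a b. atom a \<and> atom b \<and> a \<sqsubseteq> x \<and> b \<sqsubseteq> y \<and> d \<sqsubseteq> a ;; b"
proof -
  obtain a where a: "atom a" "a \<sqsubseteq> x" "d \<sqsubseteq> a ;; y"
    using join_prime_ex_atom[of "\<lambda>u. d \<sqsubseteq> u ;; y" x] assms
    by (auto simp: join_comp bot_comp atom_le_join_iff atom_not_le_bot)
  moreover obtain b where "atom b" "b \<sqsubseteq> y" "d \<sqsubseteq> a ;; b"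
    using join_prime_ex_atom[of "\<lambda>v. d \<sqsubseteq> a ;; v" y] assms(1) a(3)
    by (auto simp: comp_join comp_bot atom_le_join_iff atom_not_le_bot)
  ultimately show ?thesis by blast
qed

lemma ex_atom_le_comp_right: "atom a \<Longrightarrow> \<exists>e. atom e \<and> a \<sqsubseteq> a ;; e"
  using join_prime_ex_atom[of "\<lambda>v. a \<sqsubseteq> a ;; v" "1'"]
  by (auto simp: comp_join comp_bot comp_one atom_le_join_iff atom_not_le_bot)

section \<open>From a representation to a network\<close>

context
  fixes D :: "'b set" and \<phi> :: "'a \<Rightarrow> ('b \<times> 'b) set"
  assumes rep: "qualitative_rep A D \<phi>"
begin

lemma
  rep_inj: "inj \<phi>" and
  rep_bot: "\<phi> \<zero> = {}" and
  rep_top: "\<phi> \<one> = D \<times> D" and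
  rep_one: "\<phi> 1' = {(u, u) | u. u \<in> D}" and
  rep_join: "\<phi> (a \<oplus> b) = \<phi> a \<union> \<phi> b" and
  rep_compl: "\<phi> (\<ominus> a) = D \<times> D - \<phi> a" and
  rep_conv: "\<phi> (a\<^sup>\<smile>) = {(v, u). (u, v) \<in> \<phi> a}" and
  rep_comp_le_iff: "\<phi> a O \<phi> b \<subseteq> \<phi> c \<longleftrightarrow> a ;; b \<sqsubseteq> c"
  using rep unfolding qualitative_rep_def by simp_all

lemma rep_subset: "\<phi> a \<subseteq> D \<times> D"
  using rep_top rep_join[of a "\<ominus> a"] by (simp add: join_compl)

lemma rep_meet: "\<phi> (a \<otimes> b) = \<phi> a \<inter> \<phi> b"
  using rep_subset[of a] rep_subset[of b] unfolding nmeet_def rep_compl rep_join by blast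

lemma rep_eq_empty_iff: "\<phi> a = {} \<longleftrightarrow> a = \<zero>"
  using rep_inj rep_bot by (metis injD)

lemma ex1_atom_rep:
  assumes "(u, v) \<in> D \<times> D"
  shows "\<exists>!a. atom a \<and> (u, v) \<in> \<phi> a"
proof (rule ex_ex1I)
  show "\<exists>a. atom a \<and> (u, v) \<in> \<phi> a"
    using join_prime_ex_atom[of "\<lambda>x. (u, v) \<in> \<phi> x" "\<one>"] assms
    by (auto simp: rep_join rep_bot rep_top)
  show "a = b" if "atom a \<and> (u, v) \<in> \<phi> a" "atom b \<and> (u, v) \<in> \<phi> b" for a b
    using that atoms_eqI rep_meet rep_eq_empty_iff by blast
qed

definition rep_label :: "'b \<Rightarrow> 'b \<Rightarrow> 'a" where
  "rep_label u v = (THE a. atom a \<and> (u, v) \<in> \<phi> a)"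

lemma rep_label: "(u, v) \<in> D \<times> D \<Longrightarrow> atom (rep_label u v) \<and> (u, v) \<in> \<phi> (rep_label u v)"
  unfolding rep_label_def by (rule theI'[OF ex1_atom_rep])

lemma rep_label_eq: "atom a \<Longrightarrow> (u, v) \<in> \<phi> a \<Longrightarrow> rep_label u v = a"
  unfolding rep_label_def using ex1_atom_rep rep_subset by (blast intro: the1_equality)

lemma rep_comp_meet_ne_bot:
  assumes "(u, v) \<in> \<phi> a" "(v, w) \<in> \<phi> b" "(u, w) \<in> \<phi> c"
  shows "(a ;; b) \<otimes> c \<noteq> \<zero>"
proof
  assume "(a ;; b) \<otimes> c = \<zero>"
  then have "\<phi> a O \<phi> b \<subseteq> \<phi> (\<ominus> c)"
    by (simp add: rep_comp_le_iff BA.inf_shunt)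
  then show False
    using assms rep_compl by blast
qed

lemma rep_triangle:
  assumes "atom c" and "c \<sqsubseteq> a ;; b"
  shows "\<exists>u v w. (u, v) \<in> \<phi> a \<and> (v, w) \<in> \<phi> b \<and> (u, w) \<in> \<phi> c"
proof (rule ccontr)
  assume "\<nexists>u v w. (u, v) \<in> \<phi> a \<and> (v, w) \<in> \<phi> b \<and> (u, w) \<in> \<phi> c"
  then have "\<phi> a O \<phi> b \<subseteq> \<phi> (\<ominus> c)"
    using rep_subset rep_compl by blast
  then have "c \<sqsubseteq> \<ominus> c"
    using assms(2) rep_comp_le_iff BA.order_trans by blast
  then show False
    using assms(1) atom_le_compl_iff by blast
qed

lemma atomic_network_rep_label: "P \<subseteq> D \<Longrightarrow> atomic_network A P rep_label"
  unfolding atomic_network_def using rep_label by blast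

lemma consistent_network_rep_label:
  assumes "P \<subseteq> D"
  shows "consistent_network A P rep_label"
  unfolding consistent_network_def
proof (intro conjI ballI)
  have label: "atom (rep_label x y)" "(x, y) \<in> \<phi> (rep_label x y)" if "x \<in> P" "y \<in> P" for x y
    using that assms rep_label by blast+
  fix x y z assume xyz: "x \<in> P" "y \<in> P" "z \<in> P"
  have "(x, x) \<in> \<phi> (rep_label x x \<otimes> 1')"
    using label xyz assms by (auto simp: rep_meet rep_one)
  then show "rep_label x x \<sqsubseteq> 1'"
    using atom_meet_eq_bot_iff label(1) xyz(1) rep_eq_empty_iff by blast
  show "(rep_label x y ;; rep_label y z) \<otimes> rep_label x z \<noteq> \<zero>"
    using rep_comp_meet_ne_bot label(2) xyz by blast
  have "(x, y) \<in> \<phi> (rep_label x y \<otimes> (rep_label y x)\<^sup>\<smile>)"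
    using label(2) xyz by (simp add: rep_meet rep_conv)
  then show "rep_label x y \<otimes> (rep_label y x)\<^sup>\<smile> \<noteq> \<zero>"
    using rep_eq_empty_iff by blast
  show "rep_label x y \<noteq> \<zero>"
    using label(1) xyz unfolding is_atom_def by blast
qed

lemma ex_finite_realizing_rep_label:
  "\<exists>P. finite P \<and> P \<subseteq> D \<and> realizes_all_triangles A P rep_label"
proof -
  define T where "T = {(a, b, c). atom a \<and> atom b \<and> atom c \<and> c \<sqsubseteq> a ;; b}"
  have "\<exists>S. finite S \<and> S \<subseteq> D \<and>
      (\<exists>x\<in>S. \<exists>y\<in>S. \<exists>z\<in>S. rep_label x y = a \<and> rep_label y z = b \<and> rep_label x z = c)"
    if abc: "(a, b, c) \<in> T" for a b c
  proof -
    obtain u v w where "(u, v) \<in> \<phi> a" "(v, w) \<in> \<phi> b" "(u, w) \<in> \<phi> c"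
      using abc rep_triangle unfolding T_def by blast
    then show ?thesis
      using abc rep_label_eq rep_subset unfolding T_def
      by (intro exI[of _ "{u, v, w}"]) blast
  qed
  then obtain W where W: "\<And>a b c. (a, b, c) \<in> T \<Longrightarrow> finite (W a b c) \<and> W a b c \<subseteq> D \<and>
      (\<exists>x\<in>W a b c. \<exists>y\<in>W a b c. \<exists>z\<in>W a b c. rep_label x y = a \<and> rep_label y z = b \<and> rep_label x z = c)"
    by metis
  define P where "P = (\<Union>(a, b, c)\<in>T. W a b c)"
  have "finite T"
    by (rule finite_subset[OF subset_UNIV]) (intro finite_Prod_UNIV finite_carrier)
  then have "finite P"
    unfolding P_def using W by auto
  moreover have "P \<subseteq> D"
    unfolding P_def using W by blast
  moreover have "realizes_all_triangles A P rep_label"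
    unfolding realizes_all_triangles_def
  proof (intro allI impI)
    fix a b c assume "atom a \<and> atom b \<and> atom c \<and> c \<sqsubseteq> a ;; b"
    then have abc: "(a, b, c) \<in> T" unfolding T_def by simp
    then have "W a b c \<subseteq> P" unfolding P_def by blast
    with W[OF abc] show "\<exists>x\<in>P. \<exists>y\<in>P. \<exists>z\<in>P. rep_label x y = a \<and> rep_label y z = b \<and> rep_label x z = c"
      by blast
  qed
  ultimately show ?thesis by blast
qed

end

section \<open>From a network to a representation\<close>

context
  fixes N :: "'n set" and L :: "'n \<Rightarrow> 'n \<Rightarrow> 'a"
  assumes consistent: "consistent_network A N L" and atomic: "atomic_network A N L"
begin

lemma
  label_le_one: "x \<in> N \<Longrightarrow> L x x \<sqsubseteq> 1'" and
  label_comp_meet_ne_bot: "x \<in> N \<Longrightarrow> y \<in> N \<Longrightarrow> z \<in> N \<Longrightarrow> (L x y ;; L y z) \<otimes> L x z \<noteq> \<zero>" and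
  label_conv_meet_ne_bot: "x \<in> N \<Longrightarrow> y \<in> N \<Longrightarrow> L x y \<otimes> (L y x)\<^sup>\<smile> \<noteq> \<zero>"
  using consistent unfolding consistent_network_def by blast+

lemma label_atom: "x \<in> N \<Longrightarrow> y \<in> N \<Longrightarrow> atom (L x y)"
  using atomic unfolding atomic_network_def by blast

lemma label_conv: "x \<in> N \<Longrightarrow> y \<in> N \<Longrightarrow> L x y = (L y x)\<^sup>\<smile>"
  using atoms_eqI label_atom atom_conv label_conv_meet_ne_bot by blast

lemma label_congr_left:
  assumes "x \<in> N" "x' \<in> N" "y \<in> N" and "L x' x \<sqsubseteq> 1'"
  shows "L x y = L x' y"
proof -
  have "L x' x ;; L x y \<sqsubseteq> L x y"
    using comp_mono[OF assms(4) BA.order_refl] by (simp add: one_comp)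
  then have "L x y \<otimes> L x' y \<noteq> \<zero>"
    using label_comp_meet_ne_bot[OF assms(2,1,3)] by (rule meet_ne_bot_mono)
  then show ?thesis
    using assms(1-3) atoms_eqI label_atom by blast
qed

lemma label_congr_right:
  assumes "x \<in> N" "y \<in> N" "y' \<in> N" and "L y y' \<sqsubseteq> 1'"
  shows "L x y = L x y'"
  using assms label_conv label_congr_left[of y' y x] by metis

lemma label_le_one_sym: "x \<in> N \<Longrightarrow> y \<in> N \<Longrightarrow> L x y \<sqsubseteq> 1' \<Longrightarrow> L y x \<sqsubseteq> 1'"
  using label_congr_right[of y x y] label_le_one by simp

lemma label_le_one_trans:
  "x \<in> N \<Longrightarrow> y \<in> N \<Longrightarrow> z \<in> N \<Longrightarrow> L x y \<sqsubseteq> 1' \<Longrightarrow> L y z \<sqsubseteq> 1' \<Longrightarrow> L x z \<sqsubseteq> 1'"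
  using label_congr_right[of x y z] by simp

lemma ex_point_map:
  assumes "finite N" and "infinite (UNIV :: 'b set)"
  shows "\<exists>h :: 'n \<Rightarrow> 'b. \<forall>x\<in>N. \<forall>y\<in>N. h x = h y \<longleftrightarrow> L x y \<sqsubseteq> 1'"
proof -
  define cls where "cls x = {y \<in> N. L x y \<sqsubseteq> 1'}" for x
  have cls_eq_iff: "cls x = cls y \<longleftrightarrow> L x y \<sqsubseteq> 1'" if "x \<in> N" "y \<in> N" for x y
    using that label_le_one label_le_one_sym label_le_one_trans unfolding cls_def by blast
  obtain f :: "nat \<Rightarrow> 'b" where "inj f"
    using infinite_countable_subset[OF assms(2)] by blast
  moreover obtain g where "bij_betw g (cls ` N) {0..<card (cls ` N)}"
    using ex_bij_betw_finite_nat assms(1) by blast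
  ultimately have inj: "inj_on (f \<circ> g) (cls ` N)"
    by (meson bij_betw_imp_inj_on comp_inj_on inj_on_subset subset_UNIV)
  have "(f \<circ> g) (cls x) = (f \<circ> g) (cls y) \<longleftrightarrow> L x y \<sqsubseteq> 1'" if "x \<in> N" "y \<in> N" for x y
    using inj_on_eq_iff[OF inj imageI[OF that(1)] imageI[OF that(2)]] cls_eq_iff[OF that] by simp
  then show ?thesis
    by (intro exI[of _ "f \<circ> g \<circ> cls"]) simp
qed

definition network_rep :: "('n \<Rightarrow> 'b) \<Rightarrow> 'a \<Rightarrow> ('b \<times> 'b) set" where
  "network_rep h a = {(h x, h y) | x y. x \<in> N \<and> y \<in> N \<and> L x y \<sqsubseteq> a}"

context
  fixes h :: "'n \<Rightarrow> 'b"
  assumes h_eq_iff: "\<And>x y. x \<in> N \<Longrightarrow> y \<in> N \<Longrightarrow> h x = h y \<longleftrightarrow> L x y \<sqsubseteq> 1'"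
begin

lemma mem_network_rep_iff:
  assumes "x \<in> N" "y \<in> N"
  shows "(h x, h y) \<in> network_rep h a \<longleftrightarrow> L x y \<sqsubseteq> a"
proof
  assume "(h x, h y) \<in> network_rep h a"
  then obtain x' y' where "x' \<in> N" "y' \<in> N" "L x' y' \<sqsubseteq> a" "h x = h x'" "h y = h y'"
    unfolding network_rep_def by blast
  moreover have "L x y = L x' y'"
    using calculation assms h_eq_iff label_congr_left label_congr_right label_le_one_sym by metis
  ultimately show "L x y \<sqsubseteq> a" by simp
qed (use assms in \<open>auto simp: network_rep_def\<close>)

lemma network_rep_subset: "network_rep h a \<subseteq> h ` N \<times> h ` N"
  unfolding network_rep_def by blast

lemma network_rep_eqI:
  assumes "S \<subseteq> h ` N \<times> h ` N"
    and "\<And>x y. x \<in> N \<Longrightarrow> y \<in> N \<Longrightarrow> (h x, h y) \<in> S \<longleftrightarrow> L x y \<sqsubseteq> a"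
  shows "network_rep h a = S"
  using assms network_rep_subset mem_network_rep_iff by blast

lemma network_rep_comp_le_iff:
  assumes "realizes_all_triangles A N L"
  shows "network_rep h a O network_rep h b \<subseteq> network_rep h c \<longleftrightarrow> a ;; b \<sqsubseteq> c"
proof
  assume sub: "network_rep h a O network_rep h b \<subseteq> network_rep h c"
  show "a ;; b \<sqsubseteq> c"
  proof (rule ccontr)
    assume "\<not> a ;; b \<sqsubseteq> c"
    then obtain d where d: "atom d" "d \<sqsubseteq> a ;; b" "\<not> d \<sqsubseteq> c"
      using not_le_imp_atom by blast
    then obtain a' b' where ab': "atom a'" "atom b'" "a' \<sqsubseteq> a" "b' \<sqsubseteq> b" "d \<sqsubseteq> a' ;; b'"
      using atom_le_comp_imp_atoms by blast
    then obtain x y z where "x \<in> N" "y \<in> N" "z \<in> N" "L x y = a'" "L y z = b'" "L x z = d"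
      using assms d(1) unfolding realizes_all_triangles_def by blast
    with ab' sub have "d \<sqsubseteq> c"
      using mem_network_rep_iff by blast
    with d(3) show False ..
  qed
next
  assume le: "a ;; b \<sqsubseteq> c"
  show "network_rep h a O network_rep h b \<subseteq> network_rep h c"
  proof
    fix p assume "p \<in> network_rep h a O network_rep h b"
    then obtain x y z where xyz: "x \<in> N" "y \<in> N" "z \<in> N" "p = (h x, h z)"
      and "(h x, h y) \<in> network_rep h a" "(h y, h z) \<in> network_rep h b"
      unfolding relcomp_unfold using network_rep_subset by blast
    then have "L x y \<sqsubseteq> a" "L y z \<sqsubseteq> b"
      using xyz mem_network_rep_iff by blast+
    then have "L x y ;; L y z \<sqsubseteq> c"
      using le comp_mono BA.order_trans by blast
    then have "c \<otimes> L x z \<noteq> \<zero>"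
      using label_comp_meet_ne_bot[OF xyz(1-3)] by (rule meet_ne_bot_mono)
    then have "L x z \<sqsubseteq> c"
      using atom_meet_eq_bot_iff[OF label_atom[OF xyz(1,3)]] by (simp add: BA.inf_commute)
    then show "p \<in> network_rep h c"
      using mem_network_rep_iff xyz by blast
  qed
qed

lemma network_rep_inj:
  assumes "realizes_all_triangles A N L"
  shows "inj (network_rep h)"
proof (rule injI)
  fix a b assume eq: "network_rep h a = network_rep h b"
  show "a = b"
  proof (rule eq_iff_same_atoms_below)
    fix c assume "atom c"
    \<comment> \<open>\<open>(c, e, c)\<close> is a triangle, so \<open>c\<close> labels some edge\<close>
    then obtain e where "atom e" "c \<sqsubseteq> c ;; e"
      using ex_atom_le_comp_right by blast
    then obtain x y where xy: "x \<in> N" "y \<in> N" "L x y = c"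
      using assms \<open>atom c\<close> unfolding realizes_all_triangles_def by blast
    then show "c \<sqsubseteq> a \<longleftrightarrow> c \<sqsubseteq> b"
      using mem_network_rep_iff[OF xy(1,2), of a] mem_network_rep_iff[OF xy(1,2), of b] eq by simp
  qed
qed

lemma qualitative_rep_network_rep:
  assumes "realizes_all_triangles A N L"
  shows "qualitative_rep A (h ` N) (network_rep h)"
  unfolding qualitative_rep_def
proof (intro conjI allI)
  show "inj (network_rep h)"
    using assms by (rule network_rep_inj)
  show "network_rep h \<zero> = {}"
    by (rule network_rep_eqI) (simp_all add: label_atom atom_not_le_bot)
  show "network_rep h \<one> = h ` N \<times> h ` N"
    by (rule network_rep_eqI) simp_all
  show "network_rep h 1' = {(u, u) | u. u \<in> h ` N}"
  proof (rule network_rep_eqI)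
    fix x y assume "x \<in> N" "y \<in> N"
    then show "(h x, h y) \<in> {(u, u) | u. u \<in> h ` N} \<longleftrightarrow> L x y \<sqsubseteq> 1'"
      using h_eq_iff label_le_one_sym by auto
  qed blast
  fix a b c
  show "network_rep h (a \<oplus> b) = network_rep h a \<union> network_rep h b"
    by (rule network_rep_eqI)
      (simp_all add: network_rep_subset mem_network_rep_iff label_atom atom_le_join_iff)
  show "network_rep h (\<ominus> a) = h ` N \<times> h ` N - network_rep h a"
  proof (rule network_rep_eqI)
    fix x y assume "x \<in> N" "y \<in> N"
    then show "(h x, h y) \<in> h ` N \<times> h ` N - network_rep h a \<longleftrightarrow> L x y \<sqsubseteq> \<ominus> a"
      by (simp add: mem_network_rep_iff label_atom atom_le_compl_iff)
  qed blast
  show "network_rep h (a\<^sup>\<smile>) = {(v, u). (u, v) \<in> network_rep h a}"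
  proof (rule network_rep_eqI)
    fix x y assume "x \<in> N" "y \<in> N"
    then show "(h x, h y) \<in> {(v, u). (u, v) \<in> network_rep h a} \<longleftrightarrow> L x y \<sqsubseteq> a\<^sup>\<smile>"
      by (simp add: mem_network_rep_iff label_conv[of x y] conv_le_iff conv_conv)
  qed (use network_rep_subset in blast)
  show "network_rep h a O network_rep h b \<subseteq> network_rep h c \<longleftrightarrow> a ;; b \<sqsubseteq> c"
    using assms by (rule network_rep_comp_le_iff)
qed

end

end

lemma ex_network_of_rep:
  assumes rep: "qualitative_rep A D \<phi>"
  shows "\<exists>(N :: nat set) L. finite N \<and> consistent_network A N L \<and> atomic_network A N L
           \<and> realizes_all_triangles A N L"
proof -
  obtain P where P: "finite P" "P \<subseteq> D" "realizes_all_triangles A P (rep_label \<phi>)"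
    using ex_finite_realizing_rep_label[OF rep] by blast
  show ?thesis
    using ex_nat_network[OF P(1) consistent_network_rep_label[OF rep P(2)]
        atomic_network_rep_label[OF rep P(2)] P(3)] .
qed

lemma ex_rep_of_network:
  fixes N :: "'n set" and L :: "'n \<Rightarrow> 'n \<Rightarrow> 'a"
  assumes "finite N" and "consistent_network A N L" and "atomic_network A N L"
    and "realizes_all_triangles A N L" and "infinite (UNIV :: 'b set)"
  shows "\<exists>(D :: 'b set) \<phi>. qualitative_rep A D \<phi>"
proof -
  obtain h :: "'n \<Rightarrow> 'b" where h: "\<And>x y. x \<in> N \<Longrightarrow> y \<in> N \<Longrightarrow> h x = h y \<longleftrightarrow> L x y \<sqsubseteq> 1'"
    using ex_point_map[OF assms(2,3,1,5)] by blast
  show ?thesis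
    using qualitative_rep_network_rep[OF assms(2,3) h assms(4)] by blast
qed

end

theorem mainTheorem5:
  fixes A :: "'a nalg"
  assumes "finite (UNIV :: 'a set)"
    and "nonassoc_algebra A"
    and "infinite (UNIV :: 'b set)"
  shows "(\<exists>(D :: 'b set) \<phi>. qualitative_rep A D \<phi>) \<longleftrightarrow>
         (\<exists>(N :: nat set) L. finite N \<and> consistent_network A N L \<and> atomic_network A N L \<and>
            (\<forall>a b c. is_atom A a \<and> is_atom A b \<and> is_atom A c \<and> nle A c (ncomp A a b) \<longrightarrow>
               (\<exists>x\<in>N. \<exists>y\<in>N. \<exists>z\<in>N. L x y = a \<and> L y z = b \<and> L x z = c)))"
proof -
  interpret finite_nonassoc_algebra A
    using assms(1,2) by unfold_locales
  have "(\<exists>(D :: 'b set) \<phi>. qualitative_rep A D \<phi>) \<longleftrightarrow>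
      (\<exists>(N :: nat set) L. finite N \<and> consistent_network A N L \<and> atomic_network A N L
        \<and> realizes_all_triangles A N L)"
  proof
    assume "\<exists>(D :: 'b set) \<phi>. qualitative_rep A D \<phi>"
    then show "\<exists>(N :: nat set) L. finite N \<and> consistent_network A N L \<and> atomic_network A N L
        \<and> realizes_all_triangles A N L"
      by (elim exE) (rule ex_network_of_rep)
  next
    assume "\<exists>(N :: nat set) L. finite N \<and> consistent_network A N L \<and> atomic_network A N L
        \<and> realizes_all_triangles A N L"
    then obtain N :: "nat set" and L where "finite N" "consistent_network A N L"
        "atomic_network A N L" "realizes_all_triangles A N L"
      by blast
    then show "\<exists>(D :: 'b set) \<phi>. qualitative_rep A D \<phi>"
      by (rule ex_rep_of_network[OF _ _ _ _ assms(3)])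
  qed
  then show ?thesis
    unfolding realizes_all_triangles_def .
qed

end
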